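(* Let $H$ be a nonempty graph, let $s\ge 0$ and $t\ge 1$ be integers. Then $\hat r(tK_2,H\cup sK_1)=\hat r(tK_2,H)$. In particular, $\hat r_\infty(H\cup sK_1)=\hat r_\infty(H)$.
   Context: All graphs are finite and simple; a graph is nonempty if it has at least one edge. $G\cup H$ is the disjoint union, $tK_2$ is a matching with $t$ edges, $sK_1$ is the edgeless graph on $s$ vertices. For graphs $F,G,H$, $F\to(G,H)$ means every red--blue coloring of $E(F)$ contains a red copy of $G$ or a blue copy of $H$, and $\hat r(G,H)=\min\{|E(F)|:F\to(G,H)\}$. For a nonempty graph $G$, $\hat r_\infty(G)=\lim_{t\to\infty}\frac{\hat r(tK_2,G)}{t\,|E(G)|}$ (this limit exists). *)

theory Defs
  imports Complex_Main
begin

text \<open>A finite simple graph is represented as a pair (V, E) with V a finite set of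
natural numbers and E a set of 2-element subsets of V.  Any finite simple graph
is isomorphic to one of this form.\<close>

type_synonym graph = "nat set \<times> nat set set"

definition wf_graph :: "graph \<Rightarrow> bool" where
  "wf_graph G \<longleftrightarrow> finite (fst G) \<and>
     (\<forall>e\<in>snd G. \<exists>x y. x \<noteq> y \<and> e = {x, y} \<and> x \<in> fst G \<and> y \<in> fst G)"

definition has_copy :: "graph \<Rightarrow> nat set \<Rightarrow> nat set set \<Rightarrow> bool" where
  "has_copy G V S \<longleftrightarrow> (\<exists>f. inj_on f (fst G) \<and> f ` fst G \<subseteq> V \<and> (\<forall>e\<in>snd G. f ` e \<in> S))"

text \<open>F \<rightarrow> (G, H): every red/blue colouring of E(F) (red edges R) has a red copy of G
or a blue copy of H.\<close>
definition arrows :: "graph \<Rightarrow> graph \<Rightarrow> graph \<Rightarrow> bool" where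
  "arrows F G H \<longleftrightarrow> (\<forall>R \<subseteq> snd F. has_copy G (fst F) R \<or> has_copy H (fst F) (snd F - R))"

definition size_ramsey :: "graph \<Rightarrow> graph \<Rightarrow> nat" where
  "size_ramsey G H = (LEAST m. \<exists>F. wf_graph F \<and> arrows F G H \<and> card (snd F) = m)"

definition matching :: "nat \<Rightarrow> graph" where
  "matching t = ({0..<2*t}, (\<lambda>i. {2*i, 2*i+1}) ` {0..<t})"

definition empty_graph :: "nat \<Rightarrow> graph" where
  "empty_graph s = ({0..<s}, {})"

definition disj_union :: "graph \<Rightarrow> graph \<Rightarrow> graph" where
  "disj_union G H = ((\<lambda>v. 2*v) ` fst G \<union> (\<lambda>v. 2*v+1) ` fst H,
                     (image (\<lambda>v. 2*v)) ` snd G \<union> (image (\<lambda>v. 2*v+1)) ` snd H)"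

definition r_inf :: "graph \<Rightarrow> real" where
  "r_inf G = lim (\<lambda>t. real (size_ramsey (matching t) G) / (real t * real (card (snd G))))"

end

theory Submission
  imports Defs
begin

text \<open>Isolated vertices in the blue target graph cost no edges.  A blue copy of
H \<union> sK_1 contains a blue copy of H; conversely, a host graph arrowing (G, H) still
does so after adding s new isolated vertices, which leaves its edges and colourings
unchanged and gives room for the isolated vertices of H \<union> sK_1.  So the same edge counts
are feasible for both problems.  As H \<union> sK_1 and H also have the same number of edges,
the sequences whose limits define r_\<infinity> coincide.\<close>

lemma has_copy_mono:
  assumes "has_copy G V S" "V \<subseteq> V'" "S \<subseteq> S'"
  shows "has_copy G V' S'"
  using assms unfolding has_copy_def by (meson subset_iff order_trans)

lemma fst_disj_union:
  "fst (disj_union G K) = (\<lambda>v. 2*v) ` fst G \<union> (\<lambda>v. 2*v+1) ` fst K"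
  by (simp add: disj_union_def)

lemma snd_disj_union:
  "snd (disj_union G K) = image (\<lambda>v. 2*v) ` snd G \<union> image (\<lambda>v. 2*v+1) ` snd K"
  by (simp add: disj_union_def)

lemma has_copy_disj_union_left:
  assumes "has_copy (disj_union G K) V S"
  shows "has_copy G V S"
proof -
  obtain f where f: "inj_on f (fst (disj_union G K))" "f ` fst (disj_union G K) \<subseteq> V"
    "\<forall>e\<in>snd (disj_union G K). f ` e \<in> S"
    using assms unfolding has_copy_def by blast
  have even_vertex: "2*v \<in> fst (disj_union G K)" if "v \<in> fst G" for v
    using that by (simp add: fst_disj_union)
  have "inj_on (\<lambda>v. f (2*v)) (fst G)"
    by (rule inj_onI) (simp add: inj_on_eq_iff[OF f(1)] even_vertex)
  moreover have "(\<lambda>v. f (2*v)) ` fst G \<subseteq> V"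
    using f(2) even_vertex by auto
  moreover have "\<forall>e\<in>snd G. (\<lambda>v. f (2*v)) ` e \<in> S"
    using f(3) by (simp add: snd_disj_union image_image[symmetric, of f "(*) 2"])
  ultimately show ?thesis unfolding has_copy_def by iprover
qed

lemma has_copy_disj_union_empty_graph:
  assumes "has_copy G V S" and "V \<subseteq> {..<M}"
  shows "has_copy (disj_union G (empty_graph s)) (V \<union> {M..<M+s}) S"
proof -
  obtain g where g: "inj_on g (fst G)" "g ` fst G \<subseteq> V" "\<forall>e\<in>snd G. g ` e \<in> S"
    using assms(1) unfolding has_copy_def by blast
  have g_below: "g v < M" if "v \<in> fst G" for v
    using that g(2) assms(2) by auto
  \<comment> \<open>keep the copy of G and send the i-th isolated vertex to the fresh vertex M + i\<close>
  define f where "f v = (if even v then g (v div 2) else M + v div 2)" for v :: nat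
  have f_even: "f (2*v) = g v" and f_odd: "f (Suc (2*v)) = M + v" for v
    by (simp_all add: f_def)
  have "inj_on f ((\<lambda>v. 2*v) ` fst G)"
    by (rule inj_on_imageI) (simp add: comp_def f_even g(1))
  moreover have "inj_on f ((\<lambda>v. 2*v+1) ` {0..<s})"
    by (rule inj_on_imageI) (simp add: comp_def f_odd)
  moreover have "f ` (\<lambda>v. 2*v) ` fst G \<inter> f ` (\<lambda>v. 2*v+1) ` {0..<s} = {}"
    using g_below by (force simp: f_even f_odd)
  ultimately have "inj_on f ((\<lambda>v. 2*v) ` fst G \<union> (\<lambda>v. 2*v+1) ` {0..<s})"
    by (auto simp: inj_on_Un)
  moreover have "f ` ((\<lambda>v. 2*v) ` fst G \<union> (\<lambda>v. 2*v+1) ` {0..<s}) \<subseteq> V \<union> {M..<M+s}"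
    using g(2) by (auto simp: f_even f_odd)
  moreover have "\<forall>e\<in>snd G. f ` (\<lambda>v. 2*v) ` e \<in> S"
    using g(3) by (simp add: image_image f_even)
  ultimately show ?thesis
    unfolding has_copy_def fst_disj_union snd_disj_union empty_graph_def by auto
qed

lemma arrows_disj_union_left:
  assumes "arrows F G (disj_union H K)"
  shows "arrows F G H"
  using assms has_copy_disj_union_left unfolding arrows_def by metis

lemma arrows_pad_empty_graph:
  assumes "arrows F G H" and "fst F \<subseteq> {..<M}"
  shows "arrows (fst F \<union> {M..<M+s}, snd F) G (disj_union H (empty_graph s))"
  unfolding arrows_def fst_conv snd_conv
proof (intro allI impI)
  fix R assume "R \<subseteq> snd F"
  then have "has_copy G (fst F) R \<or> has_copy H (fst F) (snd F - R)"
    using assms(1) unfolding arrows_def by simp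
  then show "has_copy G (fst F \<union> {M..<M+s}) R \<or>
      has_copy (disj_union H (empty_graph s)) (fst F \<union> {M..<M+s}) (snd F - R)"
  proof
    assume "has_copy G (fst F) R"
    then show ?thesis using has_copy_mono[of G "fst F" R _ R] by blast
  next
    assume "has_copy H (fst F) (snd F - R)"
    then show ?thesis using has_copy_disj_union_empty_graph[OF _ assms(2)] by blast
  qed
qed

lemma wf_graph_add_vertices:
  assumes "wf_graph F" and "finite W"
  shows "wf_graph (fst F \<union> W, snd F)"
  using assms unfolding wf_graph_def by (metis Un_iff finite_Un fst_conv snd_conv)

lemma ex_arrows_disj_union_empty_graph_iff:
  "(\<exists>F. wf_graph F \<and> arrows F G (disj_union H (empty_graph s)) \<and> card (snd F) = m)
   \<longleftrightarrow> (\<exists>F. wf_graph F \<and> arrows F G H \<and> card (snd F) = m)"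
proof
  assume "\<exists>F. wf_graph F \<and> arrows F G (disj_union H (empty_graph s)) \<and> card (snd F) = m"
  then show "\<exists>F. wf_graph F \<and> arrows F G H \<and> card (snd F) = m"
    using arrows_disj_union_left by blast
next
  assume "\<exists>F. wf_graph F \<and> arrows F G H \<and> card (snd F) = m"
  then obtain F where F: "wf_graph F" "arrows F G H" "card (snd F) = m" by blast
  have "finite (fst F)" using F(1) unfolding wf_graph_def by simp
  then obtain M where "fst F \<subseteq> {..<M}" unfolding finite_nat_set_iff_bounded by auto
  then have "arrows (fst F \<union> {M..<M+s}, snd F) G (disj_union H (empty_graph s))"
    using F(2) by (rule arrows_pad_empty_graph[rotated])
  moreover have "wf_graph (fst F \<union> {M..<M+s}, snd F)"
    using F(1) by (simp add: wf_graph_add_vertices)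
  ultimately show "\<exists>F. wf_graph F \<and> arrows F G (disj_union H (empty_graph s)) \<and> card (snd F) = m"
    using F(3) by force
qed

lemma size_ramsey_disj_union_empty_graph:
  "size_ramsey G (disj_union H (empty_graph s)) = size_ramsey G H"
  unfolding size_ramsey_def ex_arrows_disj_union_empty_graph_iff ..

lemma card_edges_disj_union_empty_graph:
  "card (snd (disj_union H (empty_graph s))) = card (snd H)"
proof -
  have "inj (image (\<lambda>v::nat. 2*v))"
    by (simp add: inj_on_def inj_image_eq_iff)
  then show ?thesis
    by (simp add: snd_disj_union empty_graph_def card_image inj_on_subset)
qed

theorem lemma2p5:
  fixes H :: graph and s t :: nat
  assumes "wf_graph H" and "snd H \<noteq> {}" and "t \<ge> 1"
  shows "size_ramsey (matching t) (disj_union H (empty_graph s)) = size_ramsey (matching t) H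
         \<and> r_inf (disj_union H (empty_graph s)) = r_inf H"
  unfolding r_inf_def size_ramsey_disj_union_empty_graph card_edges_disj_union_empty_graph
  by simp

end
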